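(* Let $h_1,h_2,\dots$ be real-valued i.i.d. random variables, let $(h_n^+)_n$ and $(h_n^-)_n$ be independent copies of $(h_n)_n$, and set $h_n^{sym}=h_n^+-h_n^-$. For a sequence $(k_n)$ of i.i.d. random variables (either $(h_n)$ or $(h_n^{sym})$) define, for $\varepsilon>0$, $N\in\mathbb N$: $d_N=\mathbb E(k_1\mathbf 1_{\{|k_1|\le N\}})$, $\pi_N(\varepsilon)=\mathbb P\big(\big|\frac1N\sum_{n=1}^Nk_n-d_N\big|>\varepsilon\big)$, $\tau_N(\varepsilon)=N\,\mathbb P(|k_1|>\varepsilon N)$, $\sigma_N(\varepsilon)=\frac1N\mathbb E(k_1^2\mathbf 1_{\{|k_1|\le\varepsilon N\}})$, $v_N(\varepsilon)=\frac1N\mathrm{Var}(k_1\mathbf 1_{\{|k_1|\le\varepsilon N\}})$; write these as $\pi_N,\tau_N,\sigma_N,v_N$ (with argument $\varepsilon$, and omitted argument meaning $\varepsilon=1$) for $(h_n)$ and as $\pi^{sym}_N,\tau^{sym}_N,\sigma^{sym}_N,v^{sym}_N$ for $(h^{sym}_n)$. Then for all sufficiently large $N\in\mathbb N$: $v_N\le2\,v^{sym}_{2N}=2\,\sigma^{sym}_{2N}$, $\tau_N\le4\,\tau^{sym}_N(1/2)$, and $\pi_N\ge\frac12\pi^{sym}_N(2)$. *)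

theory Defs
  imports "HOL-Probability.Probability"
begin

(* Quantities attached to an i.i.d. real sequence k (indexed from 0: k 0 plays the role of k_1)
   on a probability space M. *)

definition d_trunc :: "'a measure \<Rightarrow> (nat \<Rightarrow> 'a \<Rightarrow> real) \<Rightarrow> nat \<Rightarrow> real" where
  "d_trunc M k N = (\<integral>x. k 0 x * indicator {y. \<bar>k 0 y\<bar> \<le> real N} x \<partial>M)"

definition pi_dev :: "'a measure \<Rightarrow> (nat \<Rightarrow> 'a \<Rightarrow> real) \<Rightarrow> nat \<Rightarrow> real \<Rightarrow> real" where
  "pi_dev M k N \<epsilon> = measure M {x \<in> space M.
      \<bar>(\<Sum>n<N. k n x) / real N - d_trunc M k N\<bar> > \<epsilon>}"

definition tau_tail :: "'a measure \<Rightarrow> (nat \<Rightarrow> 'a \<Rightarrow> real) \<Rightarrow> nat \<Rightarrow> real \<Rightarrow> real" where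
  "tau_tail M k N \<epsilon> = real N * measure M {x \<in> space M. \<bar>k 0 x\<bar> > \<epsilon> * real N}"

definition sigma_trunc :: "'a measure \<Rightarrow> (nat \<Rightarrow> 'a \<Rightarrow> real) \<Rightarrow> nat \<Rightarrow> real \<Rightarrow> real" where
  "sigma_trunc M k N \<epsilon> = (1 / real N) *
      (\<integral>x. (k 0 x)\<^sup>2 * indicator {y. \<bar>k 0 y\<bar> \<le> \<epsilon> * real N} x \<partial>M)"

definition var_rv :: "'a measure \<Rightarrow> ('a \<Rightarrow> real) \<Rightarrow> real" where
  "var_rv M X = (\<integral>x. (X x - (\<integral>y. X y \<partial>M))\<^sup>2 \<partial>M)"

definition v_trunc :: "'a measure \<Rightarrow> (nat \<Rightarrow> 'a \<Rightarrow> real) \<Rightarrow> nat \<Rightarrow> real \<Rightarrow> real" where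
  "v_trunc M k N \<epsilon> = (1 / real N) *
      var_rv M (\<lambda>x. k 0 x * indicator {y. \<bar>k 0 y\<bar> \<le> \<epsilon> * real N} x)"

end

(*
  Let U = h^+_1 and W = h^-_1, two independent copies of h_1, fix a truncation level c, and
  write I for the mean of (U - W)^2 on the event that neither |U| nor |W| exceeds c. Computing
  Var(U 1{|U| <= c}) through an independent copy gives Var = I/2 + P(|U| > c) E(U^2; |U| <=
  c), and I is at most E((U - W)^2; |U - W| <= 2c). Fix K with P(|U| > K) <= 1/2: pairs with
  one point in [-K, K] and the other beyond 2K + 1 contribute to I at least a fixed fraction
  of E(U^2; 2K + 1 < |U| <= c) + P(2K + 1 < |U| <= c), which dominates the correction term
  P(|U| > c) E(U^2; |U| <= c) once c is large. Hence Var <= I for large c. Symmetry of U - W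
  makes its truncated means vanish, so variance and truncated second moment agree. The tail
  bound is weak symmetrization, P(|U| > N) P(|W| <= N/2) <= P(|U - W| > N/2), and the
  deviation bound is a union bound, the mean of the h^sym being the difference of two means
  distributed like that of h.
*)

theory Submission
  imports Defs
begin

lemma abs_truncated_le: "\<bar>y * indicator {z. \<bar>z\<bar> \<le> c} y\<bar> \<le> \<bar>c :: real\<bar>"
  by (auto split: split_indicator)

lemma abs_square_mult_indicator_le:
  fixes y c :: real
  assumes "A \<subseteq> {z. \<bar>z\<bar> \<le> c}"
  shows "\<bar>y\<^sup>2 * indicator A y\<bar> \<le> c\<^sup>2"
  using assms abs_le_square_iff[of y c] by (auto split: split_indicator)

lemma square_mult_indicator: "(y * indicator A x)\<^sup>2 = y\<^sup>2 * (indicator A x :: real)"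
  by (simp add: indicator_def)

lemma square_le_of_abs_le:
  fixes y c :: real
  shows "\<bar>y\<bar> \<le> c \<Longrightarrow> y\<^sup>2 \<le> c\<^sup>2"
  using abs_le_square_iff[of y c] by auto

lemma square_truncated_le:
  fixes y a c :: real
  shows "y\<^sup>2 * indicator {z. \<bar>z\<bar> \<le> c} y \<le> a\<^sup>2 + y\<^sup>2 * indicator {z. a < \<bar>z\<bar> \<and> \<bar>z\<bar> \<le> c} y"
  using square_le_of_abs_le[of y a] by (cases "\<bar>y\<bar> \<le> a") (auto simp: indicator_def)

lemma square_diff_truncated_le:
  fixes u w c :: real
  shows "(u - w)\<^sup>2 * (indicator {z. \<bar>z\<bar> \<le> c} u * indicator {z. \<bar>z\<bar> \<le> c} w)
    \<le> (u - w)\<^sup>2 * indicator {z. \<bar>z\<bar> \<le> 2 * c} (u - w)"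
  by (auto simp: indicator_def)

text \<open>A point of \<open>[-K, K]\<close> and a point \<open>v\<close> with \<open>|v| > 2K + 1\<close> are at distance more than both \<open>1\<close> and \<open>|v|/2\<close>.\<close>

lemma square_diff_truncated_ge:
  fixes u w K c :: real
  assumes "0 \<le> K"
  defines "B \<equiv> {z. \<bar>z\<bar> \<le> K}" and "E \<equiv> {z. 2 * K + 1 < \<bar>z\<bar> \<and> \<bar>z\<bar> \<le> c}"
  shows "u\<^sup>2 * indicator E u * indicator B w / 4 + indicator B u * indicator E w
    \<le> (u - w)\<^sup>2 * (indicator {z. \<bar>z\<bar> \<le> c} u * indicator {z. \<bar>z\<bar> \<le> c} w)"
proof -
  consider "u \<in> E" "w \<in> B" | "u \<in> B" "w \<in> E" | "\<not> (u \<in> E \<and> w \<in> B)" "\<not> (u \<in> B \<and> w \<in> E)"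
    by blast
  then show ?thesis
  proof cases
    case 1
    then have "\<bar>\<bar>u\<bar> / 2\<bar> \<le> \<bar>u - w\<bar>" "\<bar>w\<bar> \<le> c" "u \<notin> B"
      using assms(1) abs_triangle_ineq2[of u w] by (auto simp: B_def E_def)
    then have "(\<bar>u\<bar> / 2)\<^sup>2 \<le> \<bar>u - w\<bar>\<^sup>2"
      by (intro power_mono) auto
    then show ?thesis
      using 1 \<open>\<bar>w\<bar> \<le> c\<close> \<open>u \<notin> B\<close> by (auto simp: power_divide E_def)
  next
    case 2
    then have "1 \<le> \<bar>u - w\<bar>" "\<bar>u\<bar> \<le> c" "u \<notin> E" "w \<notin> B"
      using assms(1) abs_triangle_ineq2[of w u] by (auto simp: B_def E_def abs_minus_commute)
    moreover from this(1) have "1 \<le> (u - w)\<^sup>2"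
      using abs_le_square_iff[of 1 "u - w"] by simp
    ultimately show ?thesis
      using 2 by (auto simp: E_def)
  next
    case 3
    then show ?thesis by (auto simp: indicator_def)
  qed
qed

lemma eventually_le_mult_of_tendsto_0:
  fixes f :: "'a \<Rightarrow> real"
  assumes "(f \<longlongrightarrow> 0) F" "\<forall>\<^sub>F x in F. 0 \<le> f x \<and> f x \<le> b" "0 < \<delta>"
  shows "\<forall>\<^sub>F x in F. f x \<le> \<delta> * b"
proof (cases "0 < b")
  case True
  then have "\<forall>\<^sub>F x in F. f x < \<delta> * b"
    using assms(1,3) by (intro order_tendstoD(2)) auto
  then show ?thesis by eventually_elim simp
next
  case False
  from assms(2) have "\<forall>\<^sub>F x in F. f x = 0 \<and> b = 0"
    by eventually_elim (use False in auto)
  then show ?thesis by eventually_elim simp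
qed

lemma (in prob_space) indep_sets_reindex:
  assumes "indep_sets F (f ` I)" "inj_on f I"
  shows "indep_sets (\<lambda>i. F (f i)) I"
proof (rule indep_setsI)
  fix i assume "i \<in> I" then show "F (f i) \<subseteq> events"
    using assms(1) unfolding indep_sets_def by auto
next
  fix A J assume J: "J \<noteq> {}" "J \<subseteq> I" "finite J" "\<forall>j\<in>J. A j \<in> F (f j)"
  have inj: "inj_on f J" using assms(2) J(2) inj_on_subset by blast
  define A' where "A' = (\<lambda>k. A (the_inv_into J f k))"
  have A'f: "A' (f j) = A j" if "j \<in> J" for j
    using the_inv_into_f_f[OF inj that] by (simp add: A'_def)
  have "prob (\<Inter>j\<in>J. A j) = prob (\<Inter>k\<in>f ` J. A' k)"
    using A'f by (auto intro!: arg_cong[where f = prob])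
  also have "\<dots> = (\<Prod>k\<in>f ` J. prob (A' k))"
    using J by (intro indep_setsD[OF assms(1)]) (auto simp: A'f)
  also have "\<dots> = (\<Prod>j\<in>J. prob (A j))"
    using A'f by (simp add: prod.reindex[OF inj])
  finally show "prob (\<Inter>j\<in>J. A j) = (\<Prod>j\<in>J. prob (A j))" .
qed

lemma (in prob_space) indep_vars_reindex:
  assumes "indep_vars M' X J" "f ` I \<subseteq> J" "inj_on f I"
  shows "indep_vars (\<lambda>i. M' (f i)) (\<lambda>i. X (f i)) I"
proof -
  have "indep_vars M' X (f ` I)" using assms(1,2) by (rule indep_vars_subset)
  then show ?thesis
    using assms(3) indep_sets_reindex[of "\<lambda>i. {X i -` A \<inter> space M |A. A \<in> sets (M' i)}" f I]
    unfolding indep_vars_def2 by auto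
qed

lemma (in prob_space) indep_var_of_indep_vars:
  assumes "indep_vars M' X I" "i \<in> I" "j \<in> I" "i \<noteq> j"
  shows "indep_var (M' i) (X i) (M' j) (X j)"
proof -
  let ?f = "\<lambda>b. if b then i else j"
  have "indep_vars (\<lambda>b. M' (?f b)) (\<lambda>b. X (?f b)) UNIV"
    using assms by (intro indep_vars_reindex[where f = ?f]) (auto simp: inj_on_def)
  then show ?thesis unfolding indep_var_def
    by (rule indep_vars_cong[THEN iffD1, rotated -1]) (auto split: bool.split)
qed

lemma (in prob_space) indep_var_commute:
  assumes "indep_var Ma A Mb B"
  shows "indep_var Mb B Ma A"
proof -
  have "indep_vars (case_bool Ma Mb) (case_bool A B) UNIV"
    using assms by (simp add: indep_var_def)
  from indep_var_of_indep_vars[OF this, of False True] show ?thesis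
    by simp
qed

lemma (in prob_space) prob_indep_var_conj:
  assumes "indep_var Ma X Mb Y" "A \<in> sets Ma" "B \<in> sets Mb"
  shows "prob {x\<in>space M. X x \<in> A \<and> Y x \<in> B} = prob {x\<in>space M. X x \<in> A} * prob {x\<in>space M. Y x \<in> B}"
  using indep_varD[OF assms] by (simp add: vimage_def Int_def conj_commute)

lemma (in prob_space) distr_restrict_eq_of_indep_vars:
  assumes "I \<noteq> {}" "indep_vars M' X I" "indep_vars M' Y I"
    and "\<And>i. i \<in> I \<Longrightarrow> distr M (M' i) (X i) = distr M (M' i) (Y i)"
  shows "distr M (\<Pi>\<^sub>M i\<in>I. M' i) (\<lambda>x. \<lambda>i\<in>I. X i x) = distr M (\<Pi>\<^sub>M i\<in>I. M' i) (\<lambda>x. \<lambda>i\<in>I. Y i x)"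
proof -
  have "random_variable (M' i) (X i)" "random_variable (M' i) (Y i)" if "i \<in> I" for i
    using assms(2,3) that unfolding indep_vars_def by auto
  then show ?thesis
    using assms by (simp add: indep_vars_iff_distr_eq_PiM' cong: PiM_cong)
qed

lemma (in prob_space) distr_sum_eq_of_indep_vars:
  fixes X Y :: "'i \<Rightarrow> 'a \<Rightarrow> real"
  assumes "I \<noteq> {}" "indep_vars (\<lambda>_. borel) X I" "indep_vars (\<lambda>_. borel) Y I"
    and "\<And>i. i \<in> I \<Longrightarrow> distr M borel (X i) = distr M borel (Y i)"
  shows "distr M borel (\<lambda>x. \<Sum>i\<in>I. X i x) = distr M borel (\<lambda>x. \<Sum>i\<in>I. Y i x)"
proof -
  have sum: "distr M borel (\<lambda>x. \<Sum>i\<in>I. Z i x)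
      = distr (distr M (\<Pi>\<^sub>M i\<in>I. borel) (\<lambda>x. \<lambda>i\<in>I. Z i x)) borel (\<lambda>f. \<Sum>i\<in>I. f i)"
    if "indep_vars (\<lambda>_. borel) Z I" for Z :: "'i \<Rightarrow> 'a \<Rightarrow> real"
  proof -
    have "(\<lambda>x. \<lambda>i\<in>I. Z i x) \<in> measurable M (\<Pi>\<^sub>M i\<in>I. borel)"
      using that unfolding indep_vars_def by (auto intro!: measurable_restrict)
    then show ?thesis by (subst distr_distr) (auto intro!: distr_cong simp: comp_def)
  qed
  show ?thesis
    unfolding sum[OF assms(2)] sum[OF assms(3)]
    by (rule arg_cong[OF distr_restrict_eq_of_indep_vars[OF assms]])
qed

lemma (in prob_space) prob_eq_of_distr_eq:
  assumes "X \<in> measurable M N" "Y \<in> measurable M N" "distr M N X = distr M N Y" "B \<in> sets N"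
  shows "prob {x\<in>space M. X x \<in> B} = prob {x\<in>space M. Y x \<in> B}"
  using assms measure_distr[of X M N B] measure_distr[of Y M N B]
  by (simp add: vimage_def Int_def conj_commute)

lemma (in prob_space) integral_eq_of_distr_eq:
  fixes g :: "'b \<Rightarrow> real"
  assumes "X \<in> measurable M N" "Y \<in> measurable M N" "distr M N X = distr M N Y"
    and "g \<in> borel_measurable N"
  shows "(\<integral>x. g (X x) \<partial>M) = (\<integral>x. g (Y x) \<partial>M)"
  using assms integral_distr[of X M N g] integral_distr[of Y M N g] by simp

lemma (in prob_space) var_rv_eq_of_distr_eq:
  fixes g :: "'b \<Rightarrow> real"
  assumes "X \<in> measurable M N" "Y \<in> measurable M N" "distr M N X = distr M N Y"
    and [measurable]: "g \<in> borel_measurable N"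
  shows "var_rv M (\<lambda>x. g (X x)) = var_rv M (\<lambda>x. g (Y x))"
  unfolding var_rv_def integral_eq_of_distr_eq[OF assms]
  by (rule integral_eq_of_distr_eq[OF assms(1-3)]) measurable

lemma (in prob_space) integral_indicator_comp:
  assumes "X \<in> measurable M N" "A \<in> sets N"
  shows "(\<integral>x. indicator A (X x) \<partial>M) = prob {x\<in>space M. X x \<in> A}"
proof -
  have "(\<integral>x. indicator A (X x) \<partial>M) = (\<integral>x. indicator {x\<in>space M. X x \<in> A} x \<partial>M :: real)"
    by (rule Bochner_Integration.integral_cong) (auto simp: indicator_def)
  then show ?thesis by (simp add: Int_absorb2 subset_eq)
qed

lemma (in prob_space) integrable_comp_bounded:
  fixes g :: "'b \<Rightarrow> real"
  assumes "X \<in> measurable M N" "g \<in> borel_measurable N" "\<And>y. \<bar>g y\<bar> \<le> B"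
  shows "integrable M (\<lambda>x. g (X x))"
  using assms by (intro integrable_const_bound[where B = B]) auto

lemma (in prob_space) integrable_square_truncated:
  fixes X :: "'a \<Rightarrow> real"
  assumes "X \<in> borel_measurable M" "A \<in> sets borel" "A \<subseteq> {z. \<bar>z\<bar> \<le> c}"
  shows "integrable M (\<lambda>x. (X x)\<^sup>2 * indicator A (X x))"
proof (rule integrable_comp_bounded[OF assms(1)])
  show "(\<lambda>y. y\<^sup>2 * indicator A y) \<in> borel_measurable borel" using assms(2) by measurable
  show "\<bar>y\<^sup>2 * indicator A y\<bar> \<le> c\<^sup>2" for y
    using assms(3) by (rule abs_square_mult_indicator_le)
qed

lemma (in prob_space) prob_abs_gt_tendsto_0:
  fixes X :: "'a \<Rightarrow> real"
  assumes "X \<in> borel_measurable M"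
  shows "((\<lambda>r. prob {x\<in>space M. r < \<bar>X x\<bar>}) \<longlongrightarrow> 0) at_top"
proof -
  let ?D = "distr M borel (\<lambda>x. \<bar>X x\<bar>)"
  have "real_distribution ?D" using assms by simp
  then have "(cdf ?D \<longlongrightarrow> 1) at_top" by (rule real_distribution.cdf_lim_at_top_prob)
  moreover have "cdf ?D r = 1 - prob {x\<in>space M. r < \<bar>X x\<bar>}" for r
  proof -
    have "cdf ?D r = prob (space M - {x\<in>space M. r < \<bar>X x\<bar>})"
      using assms unfolding cdf_def by (subst measure_distr) (auto intro!: arg_cong[where f = prob])
    then show ?thesis using assms by (subst (asm) prob_compl) auto
  qed
  ultimately show ?thesis
    using tendsto_diff[OF tendsto_const[of 1], of "cdf ?D" 1 at_top] by simp
qed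

lemma (in prob_space) prob_abs_diff_gt_le:
  fixes X Y :: "'a \<Rightarrow> real"
  assumes "X \<in> borel_measurable M" "Y \<in> borel_measurable M"
  shows "prob {x\<in>space M. r + s < \<bar>X x - Y x\<bar>}
    \<le> prob {x\<in>space M. r < \<bar>X x - d\<bar>} + prob {x\<in>space M. s < \<bar>Y x - d\<bar>}"
proof -
  have "prob {x\<in>space M. r + s < \<bar>X x - Y x\<bar>}
      \<le> prob ({x\<in>space M. r < \<bar>X x - d\<bar>} \<union> {x\<in>space M. s < \<bar>Y x - d\<bar>})"
    using assms by (intro finite_measure_mono) auto
  also have "\<dots> \<le> prob {x\<in>space M. r < \<bar>X x - d\<bar>} + prob {x\<in>space M. s < \<bar>Y x - d\<bar>}"
    using assms by (intro measure_subadditive) auto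
  finally show ?thesis .
qed

lemma (in prob_space) prob_mean_diff_deviation_le:
  fixes X Y Z :: "'i \<Rightarrow> 'a \<Rightarrow> real"
  assumes "I \<noteq> {}" "indep_vars (\<lambda>_. borel) X I" "indep_vars (\<lambda>_. borel) Y I"
    "indep_vars (\<lambda>_. borel) Z I"
    and "\<And>i. i \<in> I \<Longrightarrow> distr M borel (X i) = distr M borel (Z i)"
    and "\<And>i. i \<in> I \<Longrightarrow> distr M borel (Y i) = distr M borel (Z i)"
  shows "prob {x\<in>space M. 2 * \<epsilon> < \<bar>(\<Sum>i\<in>I. X i x - Y i x) / n\<bar>}
    \<le> 2 * prob {x\<in>space M. \<epsilon> < \<bar>(\<Sum>i\<in>I. Z i x) / n - d\<bar>}"
proof -
  let ?B = "{s. \<epsilon> < \<bar>s / n - d\<bar>}"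
  have [measurable]: "?B \<in> sets borel" by measurable
  have sum_measurable [measurable]: "(\<lambda>x. \<Sum>i\<in>I. V i x) \<in> borel_measurable M"
    if "indep_vars (\<lambda>_. borel) V I" for V :: "'i \<Rightarrow> 'a \<Rightarrow> real"
    using that unfolding indep_vars_def by (auto intro!: borel_measurable_sum)
  have deviation_eq: "prob {x\<in>space M. \<epsilon> < \<bar>(\<Sum>i\<in>I. V i x) / n - d\<bar>}
      = prob {x\<in>space M. \<epsilon> < \<bar>(\<Sum>i\<in>I. Z i x) / n - d\<bar>}"
    if "indep_vars (\<lambda>_. borel) V I" "\<And>i. i \<in> I \<Longrightarrow> distr M borel (V i) = distr M borel (Z i)"
    for V :: "'i \<Rightarrow> 'a \<Rightarrow> real"
    using prob_eq_of_distr_eq[OF sum_measurable[OF that(1)] sum_measurable[OF assms(4)]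
        distr_sum_eq_of_indep_vars[OF assms(1) that(1) assms(4) that(2)], of ?B]
    by simp
  have "{x\<in>space M. 2 * \<epsilon> < \<bar>(\<Sum>i\<in>I. X i x - Y i x) / n\<bar>}
      = {x\<in>space M. \<epsilon> + \<epsilon> < \<bar>(\<Sum>i\<in>I. X i x) / n - (\<Sum>i\<in>I. Y i x) / n\<bar>}"
    by (auto simp: sum_subtractf diff_divide_distrib)
  then have "prob {x\<in>space M. 2 * \<epsilon> < \<bar>(\<Sum>i\<in>I. X i x - Y i x) / n\<bar>}
    \<le> prob {x\<in>space M. \<epsilon> < \<bar>(\<Sum>i\<in>I. X i x) / n - d\<bar>} + prob {x\<in>space M. \<epsilon> < \<bar>(\<Sum>i\<in>I. Y i x) / n - d\<bar>}"
    by (simp only:)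
      (intro prob_abs_diff_gt_le borel_measurable_divide sum_measurable assms(2,3) borel_measurable_const)
  also have "\<dots> = 2 * prob {x\<in>space M. \<epsilon> < \<bar>(\<Sum>i\<in>I. Z i x) / n - d\<bar>}"
    using deviation_eq[OF assms(2,5)] deviation_eq[OF assms(3,6)] by linarith
  finally show ?thesis .
qed

locale iid_pair = prob_space +
  fixes U W :: "'a \<Rightarrow> real"
  assumes indep: "indep_var borel U borel W"
    and same_distr: "distr M borel U = distr M borel W"
begin

lemma measurable_U [measurable]: "U \<in> borel_measurable M"
  using indep by (rule indep_var_rv1)

lemma measurable_W [measurable]: "W \<in> borel_measurable M"
  using indep by (rule indep_var_rv2)

lemma integral_W_eq_U:
  fixes g :: "real \<Rightarrow> real"
  assumes "g \<in> borel_measurable borel"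
  shows "(\<integral>x. g (W x) \<partial>M) = (\<integral>x. g (U x) \<partial>M)"
  using same_distr assms by (intro integral_eq_of_distr_eq) auto

lemma prob_W_eq_U:
  assumes "B \<in> sets borel"
  shows "prob {x\<in>space M. W x \<in> B} = prob {x\<in>space M. U x \<in> B}"
  using same_distr assms by (intro prob_eq_of_distr_eq) auto

lemma integral_swap:
  fixes g :: "real \<Rightarrow> real \<Rightarrow> real"
  assumes "(\<lambda>(u, w). g u w) \<in> borel_measurable (borel \<Otimes>\<^sub>M borel)"
  shows "(\<integral>x. g (W x) (U x) \<partial>M) = (\<integral>x. g (U x) (W x) \<partial>M)"
proof -
  have "distr M (borel \<Otimes>\<^sub>M borel) (\<lambda>x. (W x, U x)) = distr M borel W \<Otimes>\<^sub>M distr M borel U"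
    using indep_var_commute[OF indep] by (simp add: indep_var_distribution_eq)
  also have "\<dots> = distr M borel U \<Otimes>\<^sub>M distr M borel W"
    by (simp add: same_distr)
  also have "\<dots> = distr M (borel \<Otimes>\<^sub>M borel) (\<lambda>x. (U x, W x))"
    using indep by (simp add: indep_var_distribution_eq)
  finally show ?thesis
    using integral_eq_of_distr_eq[where X = "\<lambda>x. (W x, U x)" and Y = "\<lambda>x. (U x, W x)", OF _ _ _ assms]
    by simp
qed

lemma integral_truncated_diff_eq_0:
  "(\<integral>x. (U x - W x) * indicator {z. \<bar>z\<bar> \<le> c} (U x - W x) \<partial>M) = 0"
proof -
  define g where "g u w = (u - w) * indicator {z::real. \<bar>z\<bar> \<le> c} (u - w)" for u w
  have "(\<lambda>(u, w). g u w) \<in> borel_measurable (borel \<Otimes>\<^sub>M borel)"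
    unfolding g_def by measurable
  then have "(\<integral>x. g (U x) (W x) \<partial>M) = (\<integral>x. g (W x) (U x) \<partial>M)"
    by (rule integral_swap[symmetric])
  also have "\<dots> = (\<integral>x. - g (U x) (W x) \<partial>M)"
    by (intro Bochner_Integration.integral_cong) (auto simp: g_def indicator_def abs_minus_commute)
  finally have "(\<integral>x. g (U x) (W x) \<partial>M) = 0"
    by simp
  then show ?thesis by (simp add: g_def)
qed

lemma
  fixes f g :: "real \<Rightarrow> real"
  assumes "f \<in> borel_measurable borel" "g \<in> borel_measurable borel"
    and "\<And>y. \<bar>f y\<bar> \<le> Bf" "\<And>y. \<bar>g y\<bar> \<le> Bg"
  shows integral_indep_mult: "(\<integral>x. f (U x) * g (W x) \<partial>M) = (\<integral>x. f (U x) \<partial>M) * (\<integral>x. g (U x) \<partial>M)"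
    and integrable_indep_mult: "integrable M (\<lambda>x. f (U x) * g (W x))"
proof -
  have indep_fg: "indep_var borel (\<lambda>x. f (U x)) borel (\<lambda>x. g (W x))"
    using indep_var_compose[OF indep assms(1,2)] by (simp add: comp_def)
  have "integrable M (\<lambda>x. f (U x))" "integrable M (\<lambda>x. g (W x))"
    using integrable_comp_bounded[OF measurable_U assms(1,3)]
      integrable_comp_bounded[OF measurable_W assms(2,4)] .
  from indep_var_lebesgue_integral[OF indep_fg this] indep_var_integrable[OF indep_fg this]
  show "(\<integral>x. f (U x) * g (W x) \<partial>M) = (\<integral>x. f (U x) \<partial>M) * (\<integral>x. g (U x) \<partial>M)"
    and "integrable M (\<lambda>x. f (U x) * g (W x))"
    by (simp_all add: integral_W_eq_U[OF assms(2)])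
qed

definition tail :: "real \<Rightarrow> real" where
  "tail r = prob {x\<in>space M. r < \<bar>U x\<bar>}"

lemma tail_nonneg: "0 \<le> tail r"
  by (simp add: tail_def)

lemma tail_antimono: "r \<le> s \<Longrightarrow> tail s \<le> tail r"
  unfolding tail_def by (intro finite_measure_mono) auto

lemma tail_tendsto_0: "(tail \<longlongrightarrow> 0) at_top"
  unfolding tail_def[abs_def] by (rule prob_abs_gt_tendsto_0) simp

lemma eventually_tail_less: "0 < e \<Longrightarrow> \<forall>\<^sub>F r in at_top. tail r < e"
  by (rule order_tendstoD(2)[OF tail_tendsto_0])

lemma prob_abs_le_eq: "prob {x\<in>space M. \<bar>U x\<bar> \<le> r} = 1 - tail r"
proof -
  have "{x\<in>space M. \<bar>U x\<bar> \<le> r} = space M - {x\<in>space M. r < \<bar>U x\<bar>}" by auto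
  then show ?thesis unfolding tail_def by (simp add: prob_compl)
qed

lemma prob_abs_between_eq:
  assumes "r \<le> s"
  shows "prob {x\<in>space M. r < \<bar>U x\<bar> \<and> \<bar>U x\<bar> \<le> s} = tail r - tail s"
proof -
  have "{x\<in>space M. r < \<bar>U x\<bar> \<and> \<bar>U x\<bar> \<le> s} = {x\<in>space M. r < \<bar>U x\<bar>} - {x\<in>space M. s < \<bar>U x\<bar>}"
    by auto
  then show ?thesis
    using assms unfolding tail_def by (simp add: finite_measure_Diff subset_eq)
qed

text \<open>Symmetrization inequality: a large \<open>U\<close> together with a moderate \<open>W\<close> forces a large difference.\<close>

lemma tail_mult_le_prob_abs_diff_gt:
  "tail (r + s) * (1 - tail s) \<le> prob {x\<in>space M. r < \<bar>U x - W x\<bar>}"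
proof -
  have "1 - tail s = prob {x\<in>space M. \<bar>W x\<bar> \<le> s}"
    using prob_W_eq_U[of "{z. \<bar>z\<bar> \<le> s}"] by (simp add: prob_abs_le_eq)
  then have "tail (r + s) * (1 - tail s) = prob {x\<in>space M. U x \<in> {z. r + s < \<bar>z\<bar>} \<and> W x \<in> {z. \<bar>z\<bar> \<le> s}}"
    unfolding tail_def by (subst prob_indep_var_conj[OF indep]) auto
  also have "\<dots> \<le> prob {x\<in>space M. r < \<bar>U x - W x\<bar>}"
    by (intro finite_measure_mono) auto
  finally show ?thesis .
qed

lemma eventually_tail_le:
  "\<forall>\<^sub>F r in at_top. tail r \<le> 2 * prob {x\<in>space M. r / 2 < \<bar>U x - W x\<bar>}"
proof -
  obtain R where R: "\<And>r. R \<le> r \<Longrightarrow> tail r < 1 / 2"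
    using eventually_tail_less[of "1 / 2"] by (auto simp: eventually_at_top_linorder)
  show ?thesis unfolding eventually_at_top_linorder
  proof (intro exI allI impI)
    fix r assume "2 * R \<le> r"
    then have "tail r * (1 / 2) \<le> tail r * (1 - tail (r / 2))"
      using R[of "r / 2"] tail_nonneg[of r] by (intro mult_left_mono) auto
    also have "\<dots> \<le> prob {x\<in>space M. r / 2 < \<bar>U x - W x\<bar>}"
      using tail_mult_le_prob_abs_diff_gt[of "r / 2" "r / 2"] by simp
    finally show "tail r \<le> 2 * prob {x\<in>space M. r / 2 < \<bar>U x - W x\<bar>}" by simp
  qed
qed

lemma pair_truncated_integral_eq:
  "(\<integral>x. (U x - W x)\<^sup>2 * (indicator {z. \<bar>z\<bar> \<le> c} (U x) * indicator {z. \<bar>z\<bar> \<le> c} (W x)) \<partial>M)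
    = 2 * (1 - tail c) * (\<integral>x. (U x)\<^sup>2 * indicator {z. \<bar>z\<bar> \<le> c} (U x) \<partial>M)
      - 2 * (\<integral>x. U x * indicator {z. \<bar>z\<bar> \<le> c} (U x) \<partial>M)\<^sup>2"
proof -
  define A where "A = {z::real. \<bar>z\<bar> \<le> c}"
  define q1 where "q1 y = y * indicator A y" for y :: real
  define q2 where "q2 y = y\<^sup>2 * indicator A y" for y :: real
  have A_sets [measurable]: "A \<in> sets borel"
    unfolding A_def by measurable
  have q1_meas: "q1 \<in> borel_measurable borel" and q2_meas: "q2 \<in> borel_measurable borel"
    and ind_meas: "(indicator A :: real \<Rightarrow> real) \<in> borel_measurable borel"
    unfolding q1_def q2_def by measurable
  have bound_q1: "\<bar>q1 y\<bar> \<le> \<bar>c\<bar>" for y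
    unfolding q1_def A_def by (rule abs_truncated_le)
  have bound_q2: "\<bar>q2 y\<bar> \<le> c\<^sup>2" for y
    unfolding q2_def by (rule abs_square_mult_indicator_le) (simp add: A_def)
  have bound_ind: "\<bar>indicator A y :: real\<bar> \<le> 1" for y
    by (simp add: indicator_def)
  have prob_A: "(\<integral>x. indicator A (U x) \<partial>M) = 1 - tail c"
    using integral_indicator_comp[OF measurable_U A_sets] by (simp add: A_def prob_abs_le_eq)
  have "(u - w)\<^sup>2 * (indicator A u * indicator A w)
      = q2 u * indicator A w - 2 * (q1 u * q1 w) + indicator A u * q2 w" for u w :: real
    by (simp add: q1_def q2_def indicator_def power2_eq_square algebra_simps)
  then have "(\<integral>x. (U x - W x)\<^sup>2 * (indicator A (U x) * indicator A (W x)) \<partial>M)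
    = (\<integral>x. q2 (U x) * indicator A (W x) \<partial>M) - 2 * (\<integral>x. q1 (U x) * q1 (W x) \<partial>M)
      + (\<integral>x. indicator A (U x) * q2 (W x) \<partial>M)"
    using integrable_indep_mult[OF q2_meas ind_meas bound_q2 bound_ind]
      integrable_indep_mult[OF q1_meas q1_meas bound_q1 bound_q1]
      integrable_indep_mult[OF ind_meas q2_meas bound_ind bound_q2]
    by simp
  also have "\<dots> = 2 * (1 - tail c) * (\<integral>x. q2 (U x) \<partial>M) - 2 * (\<integral>x. q1 (U x) \<partial>M)\<^sup>2"
    unfolding integral_indep_mult[OF q2_meas ind_meas bound_q2 bound_ind]
      integral_indep_mult[OF q1_meas q1_meas bound_q1 bound_q1]
      integral_indep_mult[OF ind_meas q2_meas bound_ind bound_q2]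
    by (simp add: prob_A power2_eq_square algebra_simps)
  finally show ?thesis
    unfolding A_def q1_def q2_def .
qed

text \<open>This is \<open>Var X = E((X - X')\<^sup>2) / 2\<close> for \<open>X = U 1{|U| \<le> c}\<close> and its copy \<open>X' = W 1{|W| \<le> c}\<close>,
  split according to which of \<open>U\<close>, \<open>W\<close> is truncated.\<close>

lemma variance_truncated_eq:
  "var_rv M (\<lambda>x. U x * indicator {z. \<bar>z\<bar> \<le> c} (U x)) =
     (\<integral>x. (U x - W x)\<^sup>2 * (indicator {z. \<bar>z\<bar> \<le> c} (U x) * indicator {z. \<bar>z\<bar> \<le> c} (W x)) \<partial>M) / 2
     + tail c * (\<integral>x. (U x)\<^sup>2 * indicator {z. \<bar>z\<bar> \<le> c} (U x) \<partial>M)"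
proof -
  have A_sets: "{z::real. \<bar>z\<bar> \<le> c} \<in> sets borel"
    by measurable
  have "integrable M (\<lambda>x. U x * indicator {z. \<bar>z\<bar> \<le> c} (U x))"
    by (rule integrable_comp_bounded[OF measurable_U _ abs_truncated_le]) measurable
  moreover have "integrable M (\<lambda>x. (U x * indicator {z. \<bar>z\<bar> \<le> c} (U x))\<^sup>2)"
    unfolding square_mult_indicator by (rule integrable_square_truncated[OF measurable_U A_sets order_refl])
  ultimately have "var_rv M (\<lambda>x. U x * indicator {z. \<bar>z\<bar> \<le> c} (U x))
      = (\<integral>x. (U x)\<^sup>2 * indicator {z. \<bar>z\<bar> \<le> c} (U x) \<partial>M)
        - (\<integral>x. U x * indicator {z. \<bar>z\<bar> \<le> c} (U x) \<partial>M)\<^sup>2"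
    unfolding var_rv_def by (simp add: variance_eq square_mult_indicator)
  then show ?thesis
    unfolding pair_truncated_integral_eq by (simp add: algebra_simps add_divide_distrib diff_divide_distrib)
qed

lemma integrable_pair_truncated:
  "integrable M (\<lambda>x. (U x - W x)\<^sup>2 * (indicator {z. \<bar>z\<bar> \<le> c} (U x) * indicator {z. \<bar>z\<bar> \<le> c} (W x)))"
proof -
  define g where "g p = (fst p - snd p)\<^sup>2 * (indicator {z. \<bar>z\<bar> \<le> c} (fst p) * indicator {z. \<bar>z\<bar> \<le> c} (snd p))"
    for p :: "real \<times> real"
  have "integrable M (\<lambda>x. g (U x, W x))"
  proof (rule integrable_comp_bounded[where X = "\<lambda>x. (U x, W x)"])
    show "g \<in> borel_measurable (borel \<Otimes>\<^sub>M borel)"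
      unfolding g_def by measurable
    show "\<bar>g p\<bar> \<le> (2 * c)\<^sup>2" for p
    proof (cases "\<bar>fst p\<bar> \<le> c \<and> \<bar>snd p\<bar> \<le> c")
      case True
      then have "\<bar>fst p - snd p\<bar> \<le> 2 * c"
        using abs_triangle_ineq4[of "fst p" "snd p"] by linarith
      then have "(fst p - snd p)\<^sup>2 \<le> (2 * c)\<^sup>2"
        by (rule square_le_of_abs_le)
      then show ?thesis
        using True by (simp add: g_def)
    qed (auto simp: g_def indicator_def)
  qed simp
  then show ?thesis by (simp add: g_def)
qed

lemma pair_truncated_integral_le:
  "(\<integral>x. (U x - W x)\<^sup>2 * (indicator {z. \<bar>z\<bar> \<le> c} (U x) * indicator {z. \<bar>z\<bar> \<le> c} (W x)) \<partial>M)
    \<le> (\<integral>x. (U x - W x)\<^sup>2 * indicator {z. \<bar>z\<bar> \<le> 2 * c} (U x - W x) \<partial>M)"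
proof -
  have "{z::real. \<bar>z\<bar> \<le> 2 * c} \<in> sets borel"
    by measurable
  then have "integrable M (\<lambda>x. (U x - W x)\<^sup>2 * indicator {z. \<bar>z\<bar> \<le> 2 * c} (U x - W x))"
    by (intro integrable_square_truncated[where c = "2 * c"]) auto
  then show ?thesis
    by (intro integral_mono[OF integrable_pair_truncated] square_diff_truncated_le)
qed

lemma pair_truncated_integral_ge:
  assumes "0 \<le> K"
  shows "(1 - tail K) * ((\<integral>x. (U x)\<^sup>2 * indicator {z. 2 * K + 1 < \<bar>z\<bar> \<and> \<bar>z\<bar> \<le> c} (U x) \<partial>M) / 4
      + prob {x\<in>space M. 2 * K + 1 < \<bar>U x\<bar> \<and> \<bar>U x\<bar> \<le> c})
    \<le> (\<integral>x. (U x - W x)\<^sup>2 * (indicator {z. \<bar>z\<bar> \<le> c} (U x) * indicator {z. \<bar>z\<bar> \<le> c} (W x)) \<partial>M)"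
proof -
  define B where "B = {z::real. \<bar>z\<bar> \<le> K}"
  define E where "E = {z::real. 2 * K + 1 < \<bar>z\<bar> \<and> \<bar>z\<bar> \<le> c}"
  define sE where "sE y = y\<^sup>2 * indicator E y" for y :: real
  have B_sets [measurable]: "B \<in> sets borel" and E_sets [measurable]: "E \<in> sets borel"
    unfolding B_def E_def by measurable
  have indB_meas: "(indicator B :: real \<Rightarrow> real) \<in> borel_measurable borel"
    and indE_meas: "(indicator E :: real \<Rightarrow> real) \<in> borel_measurable borel"
    and sE_meas: "sE \<in> borel_measurable borel"
    unfolding sE_def by measurable
  have bound_sE: "\<bar>sE y\<bar> \<le> c\<^sup>2" for y
    unfolding sE_def by (rule abs_square_mult_indicator_le) (auto simp: E_def)
  have bound_indB: "\<bar>indicator B y :: real\<bar> \<le> 1" and bound_indE: "\<bar>indicator E y :: real\<bar> \<le> 1" for y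
    by (simp_all add: indicator_def)
  have prob_B: "(\<integral>x. indicator B (U x) \<partial>M) = 1 - tail K"
    using integral_indicator_comp[OF measurable_U B_sets] by (simp add: B_def prob_abs_le_eq)
  note int1 = integrable_indep_mult[OF sE_meas indB_meas bound_sE bound_indB]
  note int2 = integrable_indep_mult[OF indB_meas indE_meas bound_indB bound_indE]
  have "(1 - tail K) * ((\<integral>x. sE (U x) \<partial>M) / 4 + prob {x\<in>space M. U x \<in> E})
    = (\<integral>x. sE (U x) * indicator B (W x) \<partial>M) / 4 + (\<integral>x. indicator B (U x) * indicator E (W x) \<partial>M)"
    unfolding integral_indep_mult[OF sE_meas indB_meas bound_sE bound_indB]
      integral_indep_mult[OF indB_meas indE_meas bound_indB bound_indE]
    by (simp add: prob_B integral_indicator_comp[OF measurable_U E_sets] algebra_simps)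
  also have "\<dots> = (\<integral>x. sE (U x) * indicator B (W x) / 4 + indicator B (U x) * indicator E (W x) \<partial>M)"
    using int1 int2 by simp
  also have "\<dots> \<le> (\<integral>x. (U x - W x)\<^sup>2 * (indicator {z. \<bar>z\<bar> \<le> c} (U x) * indicator {z. \<bar>z\<bar> \<le> c} (W x)) \<partial>M)"
    using int1 int2 integrable_pair_truncated square_diff_truncated_ge[OF assms]
    by (intro integral_mono) (auto simp: sE_def B_def E_def)
  finally show ?thesis
    unfolding sE_def E_def by simp
qed

lemma second_moment_truncated_le:
  "(\<integral>x. (U x)\<^sup>2 * indicator {z. \<bar>z\<bar> \<le> c} (U x) \<partial>M)
    \<le> a\<^sup>2 + (\<integral>x. (U x)\<^sup>2 * indicator {z. a < \<bar>z\<bar> \<and> \<bar>z\<bar> \<le> c} (U x) \<partial>M)"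
proof -
  have S_sets: "{z::real. \<bar>z\<bar> \<le> c} \<in> sets borel"
    by measurable
  have SE_sets: "{z::real. a < \<bar>z\<bar> \<and> \<bar>z\<bar> \<le> c} \<in> sets borel"
    by measurable
  have int_S: "integrable M (\<lambda>x. (U x)\<^sup>2 * indicator {z. \<bar>z\<bar> \<le> c} (U x))"
    by (rule integrable_square_truncated[where c = c, OF measurable_U S_sets]) auto
  have int_SE: "integrable M (\<lambda>x. (U x)\<^sup>2 * indicator {z. a < \<bar>z\<bar> \<and> \<bar>z\<bar> \<le> c} (U x))"
    by (rule integrable_square_truncated[where c = c, OF measurable_U SE_sets]) auto
  have "(\<integral>x. (U x)\<^sup>2 * indicator {z. \<bar>z\<bar> \<le> c} (U x) \<partial>M)
      \<le> (\<integral>x. a\<^sup>2 + (U x)\<^sup>2 * indicator {z. a < \<bar>z\<bar> \<and> \<bar>z\<bar> \<le> c} (U x) \<partial>M)"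
  proof (rule integral_mono[OF int_S])
    show "integrable M (\<lambda>x. a\<^sup>2 + (U x)\<^sup>2 * indicator {z. a < \<bar>z\<bar> \<and> \<bar>z\<bar> \<le> c} (U x))"
      by (rule Bochner_Integration.integrable_add[OF integrable_const int_SE])
    show "(U x)\<^sup>2 * indicator {z. \<bar>z\<bar> \<le> c} (U x)
        \<le> a\<^sup>2 + (U x)\<^sup>2 * indicator {z. a < \<bar>z\<bar> \<and> \<bar>z\<bar> \<le> c} (U x)" for x
      by (rule square_truncated_le)
  qed
  also have "\<dots> = a\<^sup>2 + (\<integral>x. (U x)\<^sup>2 * indicator {z. a < \<bar>z\<bar> \<and> \<bar>z\<bar> \<le> c} (U x) \<partial>M)"
    using int_SE by (simp add: prob_space)
  finally show ?thesis .
qed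

lemma variance_truncated_le:
  assumes "0 \<le> K" "2 * K + 1 \<le> c" "tail K \<le> 1 / 2" "tail c \<le> 1 / 16"
    and "tail c * (2 * K + 1)\<^sup>2 \<le> (tail (2 * K + 1) - tail c) / 4"
  shows "var_rv M (\<lambda>x. U x * indicator {z. \<bar>z\<bar> \<le> c} (U x))
    \<le> (\<integral>x. (U x - W x)\<^sup>2 * indicator {z. \<bar>z\<bar> \<le> 2 * c} (U x - W x) \<partial>M)"
proof -
  define I where "I = (\<integral>x. (U x - W x)\<^sup>2 * (indicator {z. \<bar>z\<bar> \<le> c} (U x) * indicator {z. \<bar>z\<bar> \<le> c} (W x)) \<partial>M)"
  define S where "S = (\<integral>x. (U x)\<^sup>2 * indicator {z. \<bar>z\<bar> \<le> c} (U x) \<partial>M)"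
  define SE where "SE = (\<integral>x. (U x)\<^sup>2 * indicator {z. 2 * K + 1 < \<bar>z\<bar> \<and> \<bar>z\<bar> \<le> c} (U x) \<partial>M)"
  define pE where "pE = tail (2 * K + 1) - tail c"
  have SE_nonneg: "0 \<le> SE"
    unfolding SE_def by (intro Bochner_Integration.integral_nonneg) auto
  have pE_nonneg: "0 \<le> pE"
    unfolding pE_def using tail_antimono[OF assms(2)] by simp
  have I_ge: "(1 - tail K) * (SE / 4 + pE) \<le> I"
    using pair_truncated_integral_ge[OF assms(1), of c] prob_abs_between_eq[OF assms(2)]
    unfolding I_def SE_def pE_def by simp
  have S_le: "S \<le> (2 * K + 1)\<^sup>2 + SE"
    unfolding S_def SE_def by (rule second_moment_truncated_le)
  have "tail c * S \<le> tail c * ((2 * K + 1)\<^sup>2 + SE)"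
    by (rule mult_left_mono[OF S_le tail_nonneg])
  also have "\<dots> \<le> pE / 4 + SE / 16"
    using assms(5) mult_right_mono[OF assms(4) SE_nonneg] unfolding pE_def distrib_left by linarith
  also have "\<dots> = 1 / 2 * (SE / 4 + pE) / 2"
    by (simp add: field_simps)
  also have "\<dots> \<le> (1 - tail K) * (SE / 4 + pE) / 2"
    using assms(3) SE_nonneg pE_nonneg by (intro divide_right_mono mult_right_mono) auto
  also have "\<dots> \<le> I / 2"
    using I_ge by simp
  finally have "tail c * S \<le> I / 2" .
  moreover have "var_rv M (\<lambda>x. U x * indicator {z. \<bar>z\<bar> \<le> c} (U x)) = I / 2 + tail c * S"
    unfolding I_def S_def by (rule variance_truncated_eq)
  ultimately have "var_rv M (\<lambda>x. U x * indicator {z. \<bar>z\<bar> \<le> c} (U x)) \<le> I"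
    by linarith
  then show ?thesis
    using pair_truncated_integral_le[of c] unfolding I_def by linarith
qed

text \<open>The last hypothesis of
  \<open>variance_truncated_le\<close> holds for large \<open>c\<close> because \<open>tail c \<longrightarrow> 0\<close>, and trivially when
  \<open>|U| \<le> 2K + 1\<close> almost surely.\<close>

lemma eventually_variance_truncated_le:
  "\<forall>\<^sub>F c in at_top. var_rv M (\<lambda>x. U x * indicator {z. \<bar>z\<bar> \<le> c} (U x))
    \<le> (\<integral>x. (U x - W x)\<^sup>2 * indicator {z. \<bar>z\<bar> \<le> 2 * c} (U x - W x) \<partial>M)"
proof -
  have "\<forall>\<^sub>F r in at_top. tail r < 1 / 2"
    by (rule eventually_tail_less) simp
  then have "\<forall>\<^sub>F r in at_top. 0 \<le> r \<and> tail r < 1 / 2"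
    using eventually_ge_at_top[of 0] by eventually_elim auto
  then obtain K where K: "0 \<le> K" "tail K \<le> 1 / 2"
    by (auto simp: eventually_at_top_linorder)
  define a where "a = 2 * K + 1"
  have a_pos: "0 < 4 * a\<^sup>2 + 1"
    using zero_le_power2[of a] by linarith
  have "\<forall>\<^sub>F c in at_top. tail c \<le> 1 / (4 * a\<^sup>2 + 1) * tail a"
  proof (rule eventually_le_mult_of_tendsto_0[OF tail_tendsto_0])
    show "\<forall>\<^sub>F c in at_top. 0 \<le> tail c \<and> tail c \<le> tail a"
      using eventually_ge_at_top[of a] by eventually_elim (auto simp: tail_nonneg tail_antimono)
  qed (use a_pos in simp)
  moreover have "\<forall>\<^sub>F c in at_top. tail c < 1 / 16"
    by (rule eventually_tail_less) simp
  moreover have "\<forall>\<^sub>F c in at_top. a \<le> c"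
    by (rule eventually_ge_at_top)
  ultimately show ?thesis
  proof eventually_elim
    case (elim c)
    then have "tail c * (4 * a\<^sup>2 + 1) \<le> tail a"
      using a_pos by (simp add: field_simps)
    then have "tail c * a\<^sup>2 \<le> (tail a - tail c) / 4"
      by (simp add: algebra_simps)
    then show ?case
      using K elim unfolding a_def by (intro variance_truncated_le) auto
  qed
qed

end

locale iid_symmetrization = prob_space +
  fixes h hp hm :: "nat \<Rightarrow> 'a \<Rightarrow> real"
  assumes indep_h: "indep_vars (\<lambda>_. borel) h UNIV"
    and distr_h: "\<And>n. distr M borel (h n) = distr M borel (h 0)"
    and indep_hp_hm: "indep_vars (\<lambda>_. borel)
      (\<lambda>(b, n). if b then hp n else hm n) (UNIV :: (bool \<times> nat) set)"
    and distr_hp: "\<And>n. distr M borel (hp n) = distr M borel (h 0)"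
    and distr_hm: "\<And>n. distr M borel (hm n) = distr M borel (h 0)"
begin

lemma indep_hp: "indep_vars (\<lambda>_. borel) hp UNIV"
  using indep_vars_reindex[OF indep_hp_hm, of "Pair True" UNIV] by (simp add: inj_on_def)

lemma indep_hm: "indep_vars (\<lambda>_. borel) hm UNIV"
  using indep_vars_reindex[OF indep_hp_hm, of "Pair False" UNIV] by (simp add: inj_on_def)

lemma measurable_h [measurable]: "h n \<in> borel_measurable M"
  using indep_h unfolding indep_vars_def by auto

sublocale iid_pair M "hp 0" "hm 0"
proof
  show "indep_var borel (hp 0) borel (hm 0)"
    using indep_var_of_indep_vars[OF indep_hp_hm, of "(True, 0)" "(False, 0)"] by simp
  show "distr M borel (hp 0) = distr M borel (hm 0)"
    by (simp add: distr_hp distr_hm)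
qed

lemma prob_abs_h_gt_eq_tail: "prob {x\<in>space M. r < \<bar>h 0 x\<bar>} = tail r"
  using prob_eq_of_distr_eq[of "h 0" borel "hp 0" "{z. r < \<bar>z\<bar>}"] distr_hp[of 0]
  unfolding tail_def by simp

lemma d_trunc_sym_eq_0: "d_trunc M (\<lambda>n x. hp n x - hm n x) N = 0"
  using integral_truncated_diff_eq_0[of "real N"] by (simp add: d_trunc_def indicator_def)

lemma v_trunc_sym_eq_sigma_trunc:
  "v_trunc M (\<lambda>n x. hp n x - hm n x) N \<epsilon> = sigma_trunc M (\<lambda>n x. hp n x - hm n x) N \<epsilon>"
proof -
  have "(\<integral>x. (hp 0 x - hm 0 x) * indicator {y. \<bar>hp 0 y - hm 0 y\<bar> \<le> \<epsilon> * real N} x \<partial>M) = 0"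
    using integral_truncated_diff_eq_0[of "\<epsilon> * real N"] by (simp add: indicator_def)
  then show ?thesis
    unfolding v_trunc_def sigma_trunc_def var_rv_def by (simp add: square_mult_indicator)
qed

lemma pi_dev_le:
  assumes "0 < N"
  shows "pi_dev M (\<lambda>n x. hp n x - hm n x) N 2 \<le> 2 * pi_dev M h N 1"
proof -
  have "prob {x\<in>space M. 2 * 1 < \<bar>(\<Sum>n<N. hp n x - hm n x) / real N\<bar>}
      \<le> 2 * prob {x\<in>space M. 1 < \<bar>(\<Sum>n<N. h n x) / real N - d_trunc M h N\<bar>}"
    using assms
    by (intro prob_mean_diff_deviation_le indep_vars_subset[OF indep_hp] indep_vars_subset[OF indep_hm]
        indep_vars_subset[OF indep_h]) (auto simp: distr_hp distr_hm distr_h[symmetric])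
  then show ?thesis
    by (simp add: pi_dev_def d_trunc_sym_eq_0)
qed

lemma eventually_tau_tail_le:
  "\<forall>\<^sub>F N in sequentially. tau_tail M h N 1 \<le> 4 * tau_tail M (\<lambda>n x. hp n x - hm n x) N (1 / 2)"
  using eventually_compose_filterlim[OF eventually_tail_le filterlim_real_sequentially]
proof eventually_elim
  case (elim N)
  have "tau_tail M h N 1 = real N * tail (real N)"
    by (simp add: tau_tail_def prob_abs_h_gt_eq_tail)
  also have "\<dots> \<le> real N * (2 * prob {x\<in>space M. real N / 2 < \<bar>hp 0 x - hm 0 x\<bar>})"
    using elim by (intro mult_left_mono) auto
  also have "\<dots> \<le> 4 * tau_tail M (\<lambda>n x. hp n x - hm n x) N (1 / 2)"
    by (simp add: tau_tail_def)
  finally show ?case .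
qed

lemma eventually_v_trunc_le:
  "\<forall>\<^sub>F N in sequentially. v_trunc M h N 1 \<le> 2 * v_trunc M (\<lambda>n x. hp n x - hm n x) (2 * N) 1"
  using eventually_compose_filterlim[OF eventually_variance_truncated_le filterlim_real_sequentially]
proof eventually_elim
  case (elim N)
  have "v_trunc M h N 1 = var_rv M (\<lambda>x. hp 0 x * indicator {z. \<bar>z\<bar> \<le> real N} (hp 0 x)) / real N"
    using var_rv_eq_of_distr_eq[of "h 0" borel "hp 0" "\<lambda>y. y * indicator {z. \<bar>z\<bar> \<le> real N} y"]
      distr_hp[of 0]
    by (simp add: v_trunc_def indicator_def)
  also have "\<dots> \<le> (\<integral>x. (hp 0 x - hm 0 x)\<^sup>2 * indicator {z. \<bar>z\<bar> \<le> 2 * real N} (hp 0 x - hm 0 x) \<partial>M) / real N"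
    using elim by (rule divide_right_mono) simp
  also have "\<dots> = 2 * v_trunc M (\<lambda>n x. hp n x - hm n x) (2 * N) 1"
    by (simp add: v_trunc_sym_eq_sigma_trunc sigma_trunc_def indicator_def)
  finally show ?case .
qed

end

theorem lemma8p4:
  fixes M :: "'a measure"
    and h hp hm :: "nat \<Rightarrow> 'a \<Rightarrow> real"
  assumes "prob_space M"
    and "prob_space.indep_vars M (\<lambda>_. borel) h UNIV"
    and "\<And>n. distr M borel (h n) = distr M borel (h 0)"
    and "prob_space.indep_vars M (\<lambda>_. borel)
           (\<lambda>(b, n). if b then hp n else hm n) (UNIV :: (bool \<times> nat) set)"
    and "\<And>n. distr M borel (hp n) = distr M borel (h 0)"
    and "\<And>n. distr M borel (hm n) = distr M borel (h 0)"
  shows "\<forall>\<^sub>F N in sequentially.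
    (let hs = (\<lambda>n x. hp n x - hm n x) in
       v_trunc M h N 1 \<le> 2 * v_trunc M hs (2 * N) 1
     \<and> v_trunc M hs (2 * N) 1 = sigma_trunc M hs (2 * N) 1
     \<and> tau_tail M h N 1 \<le> 4 * tau_tail M hs N (1 / 2)
     \<and> pi_dev M h N 1 \<ge> 1 / 2 * pi_dev M hs N 2)"
proof -
  interpret iid_symmetrization M h hp hm
    using assms by (simp add: iid_symmetrization_def iid_symmetrization_axioms_def)
  from eventually_v_trunc_le eventually_tau_tail_le eventually_gt_at_top[of 0]
  show ?thesis
  proof eventually_elim
    case (elim N)
    then show ?case
      using pi_dev_le[OF elim(3)] by (simp add: Let_def v_trunc_sym_eq_sigma_trunc)
  qed
qed

end
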